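(* Let $\Omega\subset\mathbb R^d$ be a bounded Lipschitz domain and let $\alpha:\Omega\times\mathbb R_+\to\mathbb R_+$ satisfy the assumptions in the context, and assume moreover that $\alpha(x,\cdot)$ is monotone decreasing for every $x\in\Omega$, i.e. $\alpha(x,t_1)\ge\alpha(x,t_2)$ whenever $0\le t_1\le t_2$ and $x\in\Omega$. Define $\mathcal J(v)=\int_0^1 a(sv;sv,v)\,ds$ for $v\in H^1_0(\Omega)$. Then $$\mathcal J(v)-\mathcal J(w)\le\tfrac12\big(a(w;v,v)-a(w;w,w)\big)\qquad\forall v,w\in H^1_0(\Omega).$$
   Context: $\alpha(x,\cdot)$ is $\mathcal C^1$ for every $x\in\Omega$ and there are constants $0<c_a\le C_a$ with $c_a\le \alpha(x,t^2)+2t^2D_2\alpha(x,t^2)\le C_a$ for all $x\in\Omega$, $t>0$, where $D_2\alpha$ is the partial derivative with respect to the second variable (this implies $c_a\le\alpha\le C_a$). For $w,u,v\in H^1_0(\Omega)$, $a(w;u,v)=\int_\Omega\alpha(\cdot,|\nabla w|^2)\nabla u\cdot\nabla v$. *)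

theory Defs
  imports "HOL-Analysis.Analysis"
begin

definition lipschitz_domain :: "(real^'d) set \<Rightarrow> bool" where
  "lipschitz_domain \<Omega> \<longleftrightarrow> open \<Omega> \<and> connected \<Omega> \<and> \<Omega> \<noteq> {} \<and>
     (\<forall>p\<in>frontier \<Omega>. \<exists>r>0. \<exists>\<nu> L h. norm \<nu> = 1 \<and>
        lipschitz_on L {y. y \<bullet> \<nu> = 0} (h :: real^'d \<Rightarrow> real) \<and>
        \<Omega> \<inter> ball p r = {x \<in> ball p r. x \<bullet> \<nu> < h (x - (x \<bullet> \<nu>) *\<^sub>R \<nu>)})"

definition bounded_lipschitz_domain :: "(real^'d) set \<Rightarrow> bool" where
  "bounded_lipschitz_domain \<Omega> \<longleftrightarrow> bounded \<Omega> \<and> lipschitz_domain \<Omega>"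

definition C1c_test :: "(real^'d) set \<Rightarrow> (real^'d \<Rightarrow> real) \<Rightarrow> (real^'d \<Rightarrow> real^'d) \<Rightarrow> bool" where
  "C1c_test \<Omega> \<phi> D\<phi> \<longleftrightarrow>
     (\<forall>x. (\<phi> has_derivative (\<lambda>h. D\<phi> x \<bullet> h)) (at x)) \<and> continuous_on UNIV D\<phi> \<and>
     compact (closure {x. \<phi> x \<noteq> 0}) \<and> closure {x. \<phi> x \<noteq> 0} \<subseteq> \<Omega>"

text \<open>H10 Omega u G: u belongs to H^1_0(Omega) with (weak) gradient G, i.e. (u,G) is the
  H^1(Omega)-limit of (phi_k, grad phi_k) for compactly supported C^1 functions phi_k.\<close>
definition H10 :: "(real^'d) set \<Rightarrow> (real^'d \<Rightarrow> real) \<Rightarrow> (real^'d \<Rightarrow> real^'d) \<Rightarrow> bool" where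
  "H10 \<Omega> u G \<longleftrightarrow>
     u \<in> borel_measurable (lebesgue_on \<Omega>) \<and> G \<in> borel_measurable (lebesgue_on \<Omega>) \<and>
     integrable (lebesgue_on \<Omega>) (\<lambda>x. (u x)\<^sup>2) \<and>
     integrable (lebesgue_on \<Omega>) (\<lambda>x. (norm (G x))\<^sup>2) \<and>
     (\<exists>\<phi> D\<phi>. (\<forall>k::nat. C1c_test \<Omega> (\<phi> k) (D\<phi> k)) \<and>
        (\<lambda>k. \<integral>x. (\<phi> k x - u x)\<^sup>2 \<partial>lebesgue_on \<Omega>) \<longlonglongrightarrow> 0 \<and>
        (\<lambda>k. \<integral>x. (norm (D\<phi> k x - G x))\<^sup>2 \<partial>lebesgue_on \<Omega>) \<longlonglongrightarrow> 0)"

text \<open>a(w;u,v) = int_Omega alpha(x,|grad w|^2) grad u . grad v, expressed via the gradients.\<close>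
definition a_form :: "(real^'d \<Rightarrow> real \<Rightarrow> real) \<Rightarrow> (real^'d) set \<Rightarrow>
    (real^'d \<Rightarrow> real^'d) \<Rightarrow> (real^'d \<Rightarrow> real^'d) \<Rightarrow> (real^'d \<Rightarrow> real^'d) \<Rightarrow> real" where
  "a_form \<alpha> \<Omega> Gw Gu Gv = (\<integral>x. \<alpha> x ((norm (Gw x))\<^sup>2) * (Gu x \<bullet> Gv x) \<partial>lebesgue_on \<Omega>)"

text \<open>J(v) = int_0^1 a(sv; sv, v) ds, where grad(sv) = s grad v.\<close>
definition J_energy :: "(real^'d \<Rightarrow> real \<Rightarrow> real) \<Rightarrow> (real^'d) set \<Rightarrow> (real^'d \<Rightarrow> real^'d) \<Rightarrow> real" where
  "J_energy \<alpha> \<Omega> Gv = (\<integral>s. a_form \<alpha> \<Omega> (\<lambda>x. s *\<^sub>R Gv x) (\<lambda>x. s *\<^sub>R Gv x) Gv \<partial>lebesgue_on {0..1})"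

end

theory Submission
  imports Defs
begin

text \<open>With \<open>\<Phi>\<^sub>x(p) = \<integral>\<^sub>0\<^sup>p \<alpha>(x,t) dt\<close>, the substitution \<open>t = s\<^sup>2 |\<nabla>v(x)|\<^sup>2\<close> and Fubini give
  \<open>\<J>(v) = \<integral>\<^sub>\<Omega> \<Phi>\<^sub>x(|\<nabla>v|\<^sup>2) / 2\<close>. Since \<open>\<alpha>(x,\<cdot>)\<close> is decreasing, \<open>\<Phi>\<^sub>x\<close> is concave and lies below its
  tangent at \<open>|\<nabla>w|\<^sup>2\<close>: \<open>\<Phi>\<^sub>x(p) - \<Phi>\<^sub>x(q) \<le> \<alpha>(x,q) (p - q)\<close>. Integrating this over \<open>\<Omega>\<close> with
  \<open>p = |\<nabla>v|\<^sup>2\<close>, \<open>q = |\<nabla>w|\<^sup>2\<close> is the claim. The upper bound \<open>C\<^sub>a\<close> on \<open>\<alpha>\<close>, which makes all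
  integrals finite, comes from the mean value theorem applied to \<open>u \<mapsto> u \<alpha>(x,u\<^sup>2)\<close>.\<close>

lemma integral_square_substitution:
  fixes a :: "real \<Rightarrow> real" and p T :: real
  assumes a: "continuous_on {0..T} a" and p: "0 \<le> p" "p \<le> T"
  shows "(LINT s|lebesgue_on {0..1}. a (s\<^sup>2 * p) * (s * p)) = integral {0..p} a / 2"
proof -
  define P where "P t = integral {0..t} a" for t
  have image: "(\<lambda>s. s\<^sup>2 * p) ` {0..1} \<subseteq> {0..T}"
  proof
    fix y assume "y \<in> (\<lambda>s. s\<^sup>2 * p) ` {0..1}"
    then obtain r where r: "r \<in> {0..1}" "y = r\<^sup>2 * p" by auto
    have "r\<^sup>2 * p \<le> 1 * p" using r p by (intro mult_right_mono power_le_one) auto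
    then show "y \<in> {0..T}" using r p by auto
  qed
  have "((\<lambda>s. a (s\<^sup>2 * p) * (s * p)) has_integral (P (1\<^sup>2 * p) / 2 - P (0\<^sup>2 * p) / 2)) {0..1}"
  proof (rule fundamental_theorem_of_calculus)
    fix s :: real assume s: "s \<in> {0..1}"
    have "(P has_real_derivative a (s\<^sup>2 * p)) (at (s\<^sup>2 * p) within {0..T})"
      unfolding P_def by (intro integral_has_real_derivative[OF a]) (use image s in blast)
    then have outer: "(P has_real_derivative a (s\<^sup>2 * p)) (at (s\<^sup>2 * p) within (\<lambda>s. s\<^sup>2 * p) ` {0..1})"
      using image by (rule has_field_derivative_subset)
    have inner: "((\<lambda>s. s\<^sup>2 * p) has_real_derivative 2 * s * p) (at s within {0..1})"
      by (auto intro!: derivative_eq_intros)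
    have "((\<lambda>s. P (s\<^sup>2 * p) / 2) has_real_derivative a (s\<^sup>2 * p) * (2 * s * p) / 2) (at s within {0..1})"
      using DERIV_image_chain[OF outer inner] by (auto intro!: derivative_eq_intros simp: o_def)
    then show "((\<lambda>s. P (s\<^sup>2 * p) / 2) has_vector_derivative a (s\<^sup>2 * p) * (s * p)) (at s within {0..1})"
      by (simp add: has_real_derivative_iff_has_vector_derivative[symmetric])
  qed simp
  moreover have "continuous_on {0..1} (\<lambda>s. a (s\<^sup>2 * p) * (s * p))"
    by (intro continuous_intros continuous_on_compose2[OF a _ image])
  ultimately show ?thesis
    by (simp add: lebesgue_integral_eq_integral continuous_imp_integrable_real integral_unique P_def)
qed

lemma integral_antitone_diff_le:
  fixes a :: "real \<Rightarrow> real" and p q T :: real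
  assumes a: "continuous_on {0..T} a" and p: "0 \<le> p" "p \<le> T" and q: "0 \<le> q" "q \<le> T"
    and antitone: "\<And>x y. 0 \<le> x \<Longrightarrow> x \<le> y \<Longrightarrow> a y \<le> a x"
  shows "integral {0..p} a - integral {0..q} a \<le> a q * (p - q)"
proof -
  have integrable: "a integrable_on {l..u}" if "0 \<le> l" "u \<le> T" for l u
    using that by (intro integrable_continuous_interval continuous_on_subset[OF a]) auto
  show ?thesis
  proof (cases "q \<le> p")
    case True
    have "integral {0..q} a + integral {q..p} a = integral {0..p} a"
      using True q p by (intro Henstock_Kurzweil_Integration.integral_combine integrable) auto
    moreover have "integral {q..p} a \<le> integral {q..p} (\<lambda>_. a q)"
      using True q p by (intro integral_le integrable) (auto intro: antitone)
    ultimately show ?thesis using True by (simp add: algebra_simps)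
  next
    case False
    have "integral {0..p} a + integral {p..q} a = integral {0..q} a"
      using False q p by (intro Henstock_Kurzweil_Integration.integral_combine integrable) auto
    moreover have "integral {p..q} (\<lambda>_. a q) \<le> integral {p..q} a"
      using False q p by (intro integral_le integrable) (auto intro: antitone)
    ultimately show ?thesis using False by (simp add: algebra_simps)
  qed
qed

lemma le_of_deriv_mult_square_le:
  fixes a Da :: "real \<Rightarrow> real" and C t :: real
  assumes deriv: "\<And>t. 0 \<le> t \<Longrightarrow> (a has_real_derivative Da t) (at t within {0..})"
    and bound: "\<And>u. 0 < u \<Longrightarrow> a (u\<^sup>2) + 2 * u\<^sup>2 * Da (u\<^sup>2) \<le> C"
    and t: "0 \<le> t"
  shows "a t \<le> C"
proof -
  have cont: "continuous_on {0..} a"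
    by (rule DERIV_continuous_on) (use deriv in auto)
  define g where "g u = u * a (u\<^sup>2)" for u
  have g_deriv: "(g has_real_derivative a (u\<^sup>2) + 2 * u\<^sup>2 * Da (u\<^sup>2)) (at u)" if "0 < u" for u
  proof -
    have "(a has_real_derivative Da (u\<^sup>2)) (at (u\<^sup>2) within {0<..})"
      by (rule has_field_derivative_subset[OF deriv]) (use that in auto)
    moreover have "at (u\<^sup>2) within {0<..} = at (u\<^sup>2)"
      by (rule at_within_open) (use that in auto)
    ultimately have "(a has_real_derivative Da (u\<^sup>2)) (at (u\<^sup>2))"
      by simp
    then have "((\<lambda>u. a (u\<^sup>2)) has_real_derivative Da (u\<^sup>2) * (2 * u)) (at u)"
      by (rule DERIV_chain2[of a _ "\<lambda>u. u\<^sup>2"]) (auto intro!: derivative_eq_intros)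
    from DERIV_mult[OF DERIV_ident this]
    show ?thesis unfolding g_def by (simp add: algebra_simps power2_eq_square)
  qed
  text \<open>By the mean value theorem \<open>a(r\<^sup>2) = g(r)/r\<close> is a value of \<open>g'\<close>.\<close>
  have positive: "a (r\<^sup>2) \<le> C" if r: "0 < r" for r
  proof -
    have "continuous_on {0..r} g"
      unfolding g_def by (intro continuous_intros continuous_on_compose2[OF cont]) auto
    then obtain l z where z: "0 < z" "z < r" "(g has_real_derivative l) (at z)" "g r - g 0 = (r - 0) * l"
      using MVT[OF r] g_deriv real_differentiable_def by blast
    have "l \<le> C"
      using DERIV_unique[OF z(3) g_deriv[OF z(1)]] bound[OF z(1)] by simp
    then have "r * a (r\<^sup>2) \<le> r * C" using z(4) r by (simp add: g_def mult_left_mono)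
    then show ?thesis using r by simp
  qed
  show ?thesis
  proof (cases "t = 0")
    case False
    then show ?thesis using positive[of "sqrt t"] t by simp
  next
    case True
    have "(\<lambda>n. inverse (real (Suc n))) \<longlonglongrightarrow> 0" by (rule LIMSEQ_inverse_real_of_nat)
    then have "(\<lambda>n. a (inverse (real (Suc n)))) \<longlonglongrightarrow> a 0"
      by (rule continuous_on_tendsto_compose[OF cont]) auto
    moreover have "a (inverse (real (Suc n))) \<le> C" for n
      using positive[of "sqrt (inverse (real (Suc n)))"] by simp
    ultimately show ?thesis using True by (simp add: LIMSEQ_le_const2)
  qed
qed

text \<open>The argument \<open>f\<close> is approximated from above by the countably-valued \<open>\<lceil>n f\<rceil> / n\<close>.\<close>
lemma borel_measurable_caratheodory:
  fixes \<alpha> :: "'b \<Rightarrow> real \<Rightarrow> real" and f :: "'a \<Rightarrow> real"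
  assumes \<alpha>: "\<And>t. (\<lambda>x. \<alpha> x t) \<in> borel_measurable N"
    and g: "g \<in> measurable M N" and f: "f \<in> borel_measurable M"
    and f_nonneg: "\<And>z. z \<in> space M \<Longrightarrow> 0 \<le> f z"
    and cont: "\<And>z. z \<in> space M \<Longrightarrow> continuous_on {0..} (\<alpha> (g z))"
  shows "(\<lambda>z. \<alpha> (g z) (f z)) \<in> borel_measurable M"
proof (rule borel_measurable_LIMSEQ_real)
  define c where "c n z = real_of_int \<lceil>f z * real (Suc n)\<rceil> / real (Suc n)" for n z
  show "(\<lambda>n. \<alpha> (g z) (c n z)) \<longlonglongrightarrow> \<alpha> (g z) (f z)" if z: "z \<in> space M" for z
  proof (rule continuous_on_tendsto_compose[OF cont[OF z]])
    have lower: "f z \<le> c n z" for n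
      unfolding c_def by (simp add: pos_le_divide_eq ceiling_correct del: of_nat_Suc)
    have upper: "c n z \<le> f z + inverse (real (Suc n))" for n
    proof -
      have "real_of_int \<lceil>f z * real (Suc n)\<rceil> \<le> f z * real (Suc n) + 1"
        by linarith
      then show ?thesis unfolding c_def by (simp add: divide_simps del: of_nat_Suc)
    qed
    have limit: "(\<lambda>n. f z + inverse (real (Suc n))) \<longlonglongrightarrow> f z + 0"
      by (intro tendsto_intros LIMSEQ_inverse_real_of_nat)
    show "(\<lambda>n. c n z) \<longlonglongrightarrow> f z"
      by (rule tendsto_sandwich[of "\<lambda>n. f z" _ _ "\<lambda>n. f z + inverse (real (Suc n))"])
         (use lower upper limit in auto)
    show "f z \<in> {0..}" using f_nonneg[OF z] by simp
    show "\<forall>\<^sub>F n in sequentially. c n z \<in> {0..}"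
      using lower f_nonneg[OF z] by (auto intro: order_trans always_eventually)
  qed
  show "(\<lambda>z. \<alpha> (g z) (c n z)) \<in> borel_measurable M" for n
  proof -
    have "(\<lambda>z. (\<lambda>i::int. \<alpha> (g z) (real_of_int i / real (Suc n))) \<lceil>f z * real (Suc n)\<rceil>)
          \<in> borel_measurable M"
    proof (rule measurable_compose_countable[where f="\<lambda>i z. \<alpha> (g z) (real_of_int i / real (Suc n))"])
      show "(\<lambda>z. \<alpha> (g z) (real_of_int i / real (Suc n))) \<in> borel_measurable M" for i
        by (rule measurable_compose[OF g \<alpha>])
      show "(\<lambda>z. \<lceil>f z * real (Suc n)\<rceil>) \<in> measurable M (count_space UNIV)"
        unfolding measurable_count_space_eq2_countable
      proof safe
        fix i :: int
        have "(\<lambda>z. \<lceil>f z * real (Suc n)\<rceil>) -` {i} \<inter> space M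
              = {z \<in> space M. real_of_int i - 1 < f z * real (Suc n) \<and> f z * real (Suc n) \<le> real_of_int i}"
          by (auto simp: ceiling_eq_iff del: of_nat_Suc; linarith)
        also have "\<dots> \<in> sets M" using f by measurable
        finally show "(\<lambda>z. \<lceil>f z * real (Suc n)\<rceil>) -` {i} \<inter> space M \<in> sets M" .
      qed auto
    qed
    then show ?thesis unfolding c_def by simp
  qed
qed

locale bounded_caratheodory_coefficient =
  fixes \<Omega> :: "(real^'d) set" and \<alpha> :: "real^'d \<Rightarrow> real \<Rightarrow> real" and C :: real
  assumes lmeasurable: "\<Omega> \<in> lmeasurable"
    and measurable: "\<And>t. (\<lambda>x. \<alpha> x t) \<in> borel_measurable (lebesgue_on \<Omega>)"
    and continuous: "\<And>x. x \<in> \<Omega> \<Longrightarrow> continuous_on {0..} (\<alpha> x)"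
    and nonneg: "\<And>x t. x \<in> \<Omega> \<Longrightarrow> 0 \<le> t \<Longrightarrow> 0 \<le> \<alpha> x t"
    and bounded: "\<And>x t. x \<in> \<Omega> \<Longrightarrow> 0 \<le> t \<Longrightarrow> \<alpha> x t \<le> C"
begin

lemma norm_coefficient_mult_le:
  assumes "x \<in> \<Omega>" "0 \<le> t" "0 \<le> r" "r \<le> R"
  shows "norm (\<alpha> x t * r) \<le> C * R"
  using nonneg[OF assms(1,2)] bounded[OF assms(1,2)] assms(3,4)
  by (simp add: abs_mult mult_mono)

lemma integrable_coefficient_mult:
  assumes q: "q \<in> borel_measurable (lebesgue_on \<Omega>)" "\<And>x. 0 \<le> q x"
    and p: "integrable (lebesgue_on \<Omega>) p" "\<And>x. 0 \<le> p x"
  shows "integrable (lebesgue_on \<Omega>) (\<lambda>x. \<alpha> x (q x) * p x)"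
proof (rule Bochner_Integration.integrable_bound[OF integrable_mult_right[OF p(1), of C]])
  show "(\<lambda>x. \<alpha> x (q x) * p x) \<in> borel_measurable (lebesgue_on \<Omega>)"
    using p(1) by (intro borel_measurable_times borel_measurable_caratheodory[OF measurable _ q]
        continuous) auto
  show "AE x in lebesgue_on \<Omega>. norm (\<alpha> x (q x) * p x) \<le> norm (C * p x)"
    by (intro AE_I2 order_trans[OF norm_coefficient_mult_le]) (use q p in auto)
qed

lemma J_energy_eq_half_primitive:
  assumes G: "G \<in> borel_measurable (lebesgue_on \<Omega>)"
    and square_integrable: "integrable (lebesgue_on \<Omega>) (\<lambda>x. (norm (G x))\<^sup>2)"
  defines "\<Phi> \<equiv> \<lambda>x. integral {0..(norm (G x))\<^sup>2} (\<alpha> x) / 2"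
  shows "J_energy \<alpha> \<Omega> G = (\<integral>x. \<Phi> x \<partial>lebesgue_on \<Omega>)" and "integrable (lebesgue_on \<Omega>) \<Phi>"
proof -
  define M1 where "M1 = lebesgue_on {0..1::real}"
  define M2 where "M2 = lebesgue_on \<Omega>"
  define p where "p x = (norm (G x))\<^sup>2" for x
  define f where "f s x = \<alpha> x (s\<^sup>2 * p x) * (s * p x)" for s x
  interpret M1: finite_measure M1
    unfolding M1_def by (rule finite_measure_lebesgue_on) simp
  interpret M2: finite_measure M2
    unfolding M2_def by (rule finite_measure_lebesgue_on[OF lmeasurable])
  interpret P: pair_sigma_finite M1 M2 by unfold_locales
  have space: "space M1 = {0..1}" "space M2 = \<Omega>" unfolding M1_def M2_def by simp_all
  have p_integrable: "integrable M2 p" using square_integrable unfolding M2_def p_def .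
  have p_snd: "(\<lambda>z. p (snd z)) \<in> borel_measurable (M1 \<Otimes>\<^sub>M M2)"
    by (rule measurable_compose[OF measurable_snd borel_measurable_integrable[OF p_integrable]])
  have fst: "fst \<in> borel_measurable (M1 \<Otimes>\<^sub>M M2)"
    unfolding M1_def by (intro measurable_compose[OF measurable_fst] measurable_restrict_space1
        measurable_completion) simp
  have f_measurable: "case_prod f \<in> borel_measurable (M1 \<Otimes>\<^sub>M M2)"
    unfolding f_def case_prod_beta
    by (intro borel_measurable_times borel_measurable_caratheodory[OF measurable, folded M2_def]
        borel_measurable_power fst p_snd measurable_snd continuous)
       (auto simp: p_def space_pair_measure space)
  have bound_integrable: "integrable (M1 \<Otimes>\<^sub>M M2) (\<lambda>z. C * p (snd z))"
    by (intro P.Fubini_integrable borel_measurable_times p_snd) (use p_integrable in simp_all)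
  have f_integrable: "integrable (M1 \<Otimes>\<^sub>M M2) (case_prod f)"
  proof (rule Bochner_Integration.integrable_bound[OF bound_integrable f_measurable AE_I2])
    fix z assume "z \<in> space (M1 \<Otimes>\<^sub>M M2)"
    then obtain s x where z: "z = (s, x)" "s \<in> {0..1}" "x \<in> \<Omega>"
      by (auto simp: space_pair_measure space)
    have "norm (f s x) \<le> C * p x"
      unfolding f_def using z by (intro norm_coefficient_mult_le mult_left_le_one_le) (auto simp: p_def)
    then show "norm (case_prod f z) \<le> norm (C * p (snd z))" using z by simp
  qed
  have inner: "(LINT s|M1. f s x) = \<Phi> x" if "x \<in> \<Omega>" for x
    unfolding f_def M1_def \<Phi>_def p_def
    by (rule integral_square_substitution[OF continuous_on_subset[OF continuous[OF that]]]) auto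
  have "J_energy \<alpha> \<Omega> G = (LINT s|M1. LINT x|M2. f s x)"
    unfolding J_energy_def a_form_def M1_def M2_def f_def p_def
    by (intro Bochner_Integration.integral_cong refl)
       (simp add: power_mult_distrib power2_norm_eq_inner)
  also have "\<dots> = (LINT x|M2. LINT s|M1. f s x)"
    using P.Fubini_integral[OF f_integrable] by simp
  also have "\<dots> = (LINT x|M2. \<Phi> x)"
    by (intro Bochner_Integration.integral_cong refl) (simp add: inner space)
  finally show "J_energy \<alpha> \<Omega> G = (\<integral>x. \<Phi> x \<partial>lebesgue_on \<Omega>)" unfolding M2_def .
  show "integrable (lebesgue_on \<Omega>) \<Phi>"
    using P.integrable_snd[OF f_integrable] unfolding M2_def[symmetric]
    by (rule Bochner_Integration.integrable_cong[THEN iffD1, OF refl, rotated]) (simp add: inner space)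
qed

lemma J_energy_diff_le:
  assumes antitone: "\<And>x t1 t2. x \<in> \<Omega> \<Longrightarrow> 0 \<le> t1 \<Longrightarrow> t1 \<le> t2 \<Longrightarrow> \<alpha> x t2 \<le> \<alpha> x t1"
    and Gv: "Gv \<in> borel_measurable (lebesgue_on \<Omega>)" "integrable (lebesgue_on \<Omega>) (\<lambda>x. (norm (Gv x))\<^sup>2)"
    and Gw: "Gw \<in> borel_measurable (lebesgue_on \<Omega>)" "integrable (lebesgue_on \<Omega>) (\<lambda>x. (norm (Gw x))\<^sup>2)"
  shows "J_energy \<alpha> \<Omega> Gv - J_energy \<alpha> \<Omega> Gw \<le> (a_form \<alpha> \<Omega> Gw Gv Gv - a_form \<alpha> \<Omega> Gw Gw Gw) / 2"
proof -
  define p where "p x = (norm (Gv x))\<^sup>2" for x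
  define q where "q x = (norm (Gw x))\<^sup>2" for x
  define \<Phi> where "\<Phi> x r = integral {0..r} (\<alpha> x) / 2" for x r
  have Jv: "J_energy \<alpha> \<Omega> Gv = (LINT x|lebesgue_on \<Omega>. \<Phi> x (p x))"
    and \<Phi>v: "integrable (lebesgue_on \<Omega>) (\<lambda>x. \<Phi> x (p x))"
    using J_energy_eq_half_primitive[OF Gv] unfolding \<Phi>_def p_def by auto
  have Jw: "J_energy \<alpha> \<Omega> Gw = (LINT x|lebesgue_on \<Omega>. \<Phi> x (q x))"
    and \<Phi>w: "integrable (lebesgue_on \<Omega>) (\<lambda>x. \<Phi> x (q x))"
    using J_energy_eq_half_primitive[OF Gw] unfolding \<Phi>_def q_def by auto
  have q_measurable: "q \<in> borel_measurable (lebesgue_on \<Omega>)"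
    using Gw(1) unfolding q_def by measurable
  have av: "integrable (lebesgue_on \<Omega>) (\<lambda>x. \<alpha> x (q x) * p x)"
    and aw: "integrable (lebesgue_on \<Omega>) (\<lambda>x. \<alpha> x (q x) * q x)"
    using Gv(2) Gw(2) q_measurable
    by (auto intro!: integrable_coefficient_mult simp: p_def q_def)
  have tangent: "\<Phi> x (p x) - \<Phi> x (q x) \<le> (\<alpha> x (q x) * p x - \<alpha> x (q x) * q x) / 2"
    if x: "x \<in> \<Omega>" for x
  proof -
    define T where "T = max (p x) (q x)"
    have "continuous_on {0..T} (\<alpha> x)" by (rule continuous_on_subset[OF continuous[OF x]]) auto
    then have "integral {0..p x} (\<alpha> x) - integral {0..q x} (\<alpha> x) \<le> \<alpha> x (q x) * (p x - q x)"
      by (rule integral_antitone_diff_le) (auto simp: T_def p_def q_def intro: antitone[OF x])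
    then show ?thesis unfolding \<Phi>_def by (simp add: algebra_simps divide_right_mono)
  qed
  have "J_energy \<alpha> \<Omega> Gv - J_energy \<alpha> \<Omega> Gw = (LINT x|lebesgue_on \<Omega>. \<Phi> x (p x) - \<Phi> x (q x))"
    using Jv Jw Bochner_Integration.integral_diff[OF \<Phi>v \<Phi>w] by simp
  also have "\<dots> \<le> (LINT x|lebesgue_on \<Omega>. (\<alpha> x (q x) * p x - \<alpha> x (q x) * q x) / 2)"
    by (rule integral_mono) (use \<Phi>v \<Phi>w av aw tangent in auto)
  also have "\<dots> = (a_form \<alpha> \<Omega> Gw Gv Gv - a_form \<alpha> \<Omega> Gw Gw Gw) / 2"
    using Bochner_Integration.integral_diff[OF av aw]
    by (simp add: a_form_def p_def q_def power2_norm_eq_inner)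
  finally show ?thesis .
qed

end

theorem lemma4p1:
  fixes \<Omega> :: "(real^'d) set"
    and \<alpha> D\<alpha> :: "real^'d \<Rightarrow> real \<Rightarrow> real"
    and c_a C_a :: real
    and v w :: "real^'d \<Rightarrow> real"
    and Gv Gw :: "real^'d \<Rightarrow> real^'d"
  assumes dom: "bounded_lipschitz_domain \<Omega>"
    and meas: "\<And>t. (\<lambda>x. \<alpha> x t) \<in> borel_measurable (lebesgue_on \<Omega>)"
    and nonneg: "\<And>x t. x \<in> \<Omega> \<Longrightarrow> 0 \<le> t \<Longrightarrow> 0 \<le> \<alpha> x t"
    and deriv: "\<And>x t. x \<in> \<Omega> \<Longrightarrow> 0 \<le> t \<Longrightarrow>
                  (\<alpha> x has_real_derivative D\<alpha> x t) (at t within {0..})"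
    and deriv_cont: "\<And>x. x \<in> \<Omega> \<Longrightarrow> continuous_on {0..} (D\<alpha> x)"
    and cpos: "0 < c_a" "c_a \<le> C_a"
    and bounds: "\<And>x t. x \<in> \<Omega> \<Longrightarrow> 0 < t \<Longrightarrow>
                  c_a \<le> \<alpha> x (t\<^sup>2) + 2 * t\<^sup>2 * D\<alpha> x (t\<^sup>2) \<and>
                  \<alpha> x (t\<^sup>2) + 2 * t\<^sup>2 * D\<alpha> x (t\<^sup>2) \<le> C_a"
    and decr: "\<And>x t1 t2. x \<in> \<Omega> \<Longrightarrow> 0 \<le> t1 \<Longrightarrow> t1 \<le> t2 \<Longrightarrow> \<alpha> x t2 \<le> \<alpha> x t1"
    and v: "H10 \<Omega> v Gv"
    and w: "H10 \<Omega> w Gw"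
  shows "J_energy \<alpha> \<Omega> Gv - J_energy \<alpha> \<Omega> Gw
           \<le> (a_form \<alpha> \<Omega> Gw Gv Gv - a_form \<alpha> \<Omega> Gw Gw Gw) / 2"
proof -
  have "\<Omega> \<in> lmeasurable"
    using dom unfolding bounded_lipschitz_domain_def lipschitz_domain_def
    by (auto intro: lmeasurable_open)
  moreover have "continuous_on {0..} (\<alpha> x)" if "x \<in> \<Omega>" for x
    by (rule DERIV_continuous_on) (use deriv[OF that] in auto)
  moreover have "\<alpha> x t \<le> C_a" if "x \<in> \<Omega>" "0 \<le> t" for x t
    by (rule le_of_deriv_mult_square_le[where Da="D\<alpha> x"])
       (use deriv[OF that(1)] bounds[OF that(1)] that in auto)
  ultimately interpret bounded_caratheodory_coefficient \<Omega> \<alpha> C_a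
    using meas nonneg by unfold_locales auto
  show ?thesis
    using J_energy_diff_le[OF decr] v w unfolding H10_def by auto
qed

end
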